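(* Let $\alpha\ge 1$ and let $G=(V,E)$ be a finite connected undirected unweighted $\alpha$-almost regular graph with $n$ vertices. If $r\ge\alpha^2$, then for every $\lambda\in[0,1]$ and every nonempty initial mutant set $S_0\subseteq V$, the $\lambda$-mixed Moran process with fitness $r$ has expected absorption time $O_r(n^4)$ and fixation probability $\Omega_r(n^{-2})$; that is, there are constants $C_r,c_r>0$ depending only on $r$ (not on $G$, $n$, $\lambda$ or $S_0$) with absorption time at most $C_r n^4$ and $\mathrm{fp}^{\lambda,r}_G(S_0)\ge c_r n^{-2}$.
   Context: A graph is $\alpha$-almost regular if its maximum degree is at most $\alpha$ times its minimum degree. The $\lambda$-mixed Moran process on a connected graph $G=(V,E)$ with $n=|V|\ge 2$: each vertex hosts a resident (fitness $1$) or mutant (fitness $r>0$); the state is the mutant set $S_t\subseteq V$. Each step, independently: with probability $\lambda$ a Birth-death step (a vertex $u$ chosen with probability proportional to fitness among all vertices; a uniformly random neighbor of $u$ takes $u$'s type); with probability $1-\lambda$ a death-Birth step (a uniformly random vertex $v$ dies; a neighbor $u$ of $v$ chosen with probability proportional to fitness among the neighbors of $v$; $v$ takes $u$'s type). $\mathrm{fp}^{\lambda,r}_G(S_0)$ is the probability of reaching $S_t=V$ from $S_0$; the absorption time is the expected number of steps until $S_t\in\{\emptyset,V\}$. *)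

theory Defs
  imports "HOL-Analysis.Analysis"
begin

definition graph :: "'a set \<Rightarrow> ('a \<Rightarrow> 'a \<Rightarrow> bool) \<Rightarrow> bool" where
  "graph V E \<longleftrightarrow> finite V \<and> (\<forall>u v. E u v \<longrightarrow> u \<in> V \<and> v \<in> V)
     \<and> (\<forall>u v. E u v \<longrightarrow> E v u) \<and> (\<forall>u. \<not> E u u)"

definition connected_graph :: "'a set \<Rightarrow> ('a \<Rightarrow> 'a \<Rightarrow> bool) \<Rightarrow> bool" where
  "connected_graph V E \<longleftrightarrow> graph V E \<and> (\<forall>u\<in>V. \<forall>v\<in>V. E\<^sup>*\<^sup>* u v)"

definition nbrs :: "'a set \<Rightarrow> ('a \<Rightarrow> 'a \<Rightarrow> bool) \<Rightarrow> 'a \<Rightarrow> 'a set" where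
  "nbrs V E u = {v \<in> V. E u v}"

definition deg :: "'a set \<Rightarrow> ('a \<Rightarrow> 'a \<Rightarrow> bool) \<Rightarrow> 'a \<Rightarrow> nat" where
  "deg V E u = card (nbrs V E u)"

definition almost_regular :: "real \<Rightarrow> 'a set \<Rightarrow> ('a \<Rightarrow> 'a \<Rightarrow> bool) \<Rightarrow> bool" where
  "almost_regular \<alpha> V E \<longleftrightarrow>
     real (Max (deg V E ` V)) \<le> \<alpha> * real (Min (deg V E ` V))"

definition fitness :: "real \<Rightarrow> 'a set \<Rightarrow> 'a \<Rightarrow> real" where
  "fitness r S u = (if u \<in> S then r else 1)"

definition copy_type :: "'a set \<Rightarrow> 'a \<Rightarrow> 'a \<Rightarrow> 'a set" where
  "copy_type S u v = (if u \<in> S then insert v S else S - {v})"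

definition moran_trans ::
  "'a set \<Rightarrow> ('a \<Rightarrow> 'a \<Rightarrow> bool) \<Rightarrow> real \<Rightarrow> real \<Rightarrow> 'a set \<Rightarrow> 'a set \<Rightarrow> real" where
  "moran_trans V E lam r S T =
     lam * (\<Sum>u\<in>V. \<Sum>v\<in>nbrs V E u.
              (fitness r S u / (\<Sum>w\<in>V. fitness r S w)) * (1 / real (deg V E u))
              * (if copy_type S u v = T then 1 else 0))
   + (1 - lam) * (\<Sum>v\<in>V. \<Sum>u\<in>nbrs V E v.
              (1 / real (card V)) * (fitness r S u / (\<Sum>w\<in>nbrs V E v. fitness r S w))
              * (if copy_type S u v = T then 1 else 0))"

fun moran_steps ::
  "'a set \<Rightarrow> ('a \<Rightarrow> 'a \<Rightarrow> bool) \<Rightarrow> real \<Rightarrow> real \<Rightarrow> nat \<Rightarrow> 'a set \<Rightarrow> 'a set \<Rightarrow> real" where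
  "moran_steps V E lam r 0 S T = (if S = T then 1 else 0)"
| "moran_steps V E lam r (Suc k) S T =
     (\<Sum>U\<in>Pow V. moran_steps V E lam r k S U * moran_trans V E lam r U T)"

text \<open>Fixation probability: probability of eventually reaching S_t = V
(limit of P(S_k = V), V being absorbing).\<close>
definition fixation_prob ::
  "'a set \<Rightarrow> ('a \<Rightarrow> 'a \<Rightarrow> bool) \<Rightarrow> real \<Rightarrow> real \<Rightarrow> 'a set \<Rightarrow> real" where
  "fixation_prob V E lam r S0 = lim (\<lambda>k. moran_steps V E lam r k S0 V)"

text \<open>Expected absorption time: E[T] = sum over k of P(T > k), where
T is the first time S_t is in {empty, V}.\<close>
definition absorption_time ::
  "'a set \<Rightarrow> ('a \<Rightarrow> 'a \<Rightarrow> bool) \<Rightarrow> real \<Rightarrow> real \<Rightarrow> 'a set \<Rightarrow> ennreal" where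
  "absorption_time V E lam r S0 =
     (\<Sum>k. ennreal (\<Sum>U\<in>Pow V - {{}, V}. moran_steps V E lam r k S0 U))"

end

theory Submission
  imports Defs
begin

(*
  Let vol S be the sum of the degrees of the vertices in S. If r deg(v)^2 >= deg(u)^2 on every
  edge uv, which r >= alpha^2 guarantees, then vol(S_t) is a submartingale: for each boundary edge,
  the mutant u replacing the resident v gains deg v with at least as much probability weight as
  v replacing u loses deg u, both for Birth-death and for death-Birth steps. As the process is
  absorbed with probability 1, this gives fp(S0) >= vol S0 / vol V >= 1 / (r n).
  While S_t is a proper nonempty subset, a boundary edge with mutant endpoint u is used with
  probability at least 1 / (n max_deg), so the squared increment of vol has expectation at least
  min_deg^2 / (n max_deg). Consequently K (vol V^2 - vol S^2), with K the reciprocal of that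
  bound, drops in expectation by at least 1 per unabsorbed step, and its initial value
  K vol V^2 <= r n^4 bounds the expected absorption time.
*)

section \<open>Degrees in a connected graph\<close>

definition min_deg :: "'a set \<Rightarrow> ('a \<Rightarrow> 'a \<Rightarrow> bool) \<Rightarrow> real" where
  "min_deg V E = real (Min (deg V E ` V))"

definition max_deg :: "'a set \<Rightarrow> ('a \<Rightarrow> 'a \<Rightarrow> bool) \<Rightarrow> real" where
  "max_deg V E = real (Max (deg V E ` V))"

locale moran_graph =
  fixes V :: "'a set" and E :: "'a \<Rightarrow> 'a \<Rightarrow> bool" and lam r :: real
  assumes connected: "connected_graph V E" and card_ge_2: "2 \<le> card V"
    and lam_nonneg: "0 \<le> lam" and lam_le_1: "lam \<le> 1" and r_ge_1: "1 \<le> r"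
begin

lemma finite_V: "finite V"
  using connected by (simp add: connected_graph_def graph_def)

lemma edge_in_V: "E u v \<Longrightarrow> u \<in> V \<and> v \<in> V"
  using connected by (simp add: connected_graph_def graph_def)

lemma edge_sym: "E u v \<Longrightarrow> E v u"
  using connected by (simp add: connected_graph_def graph_def)

lemma card_V_pos: "0 < real (card V)"
  using card_ge_2 by simp

lemma V_nonempty: "V \<noteq> {}"
  using card_ge_2 by auto

lemma finite_nbrs [simp]: "finite (nbrs V E u)"
  using finite_V by (simp add: nbrs_def)

lemma mem_nbrs_iff: "v \<in> nbrs V E u \<longleftrightarrow> E u v"
  using edge_in_V by (auto simp: nbrs_def)

lemma exists_boundary_edge:
  assumes "U \<subseteq> V" "U \<noteq> {}" "U \<noteq> V"
  shows "\<exists>u v. E u v \<and> u \<in> U \<and> v \<in> V - U"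
proof -
  obtain x y where x: "x \<in> U" and y: "y \<in> V" "y \<notin> U" using assms by auto
  have "E\<^sup>*\<^sup>* x y"
    using connected x y assms(1) by (auto simp: connected_graph_def)
  then have "\<exists>u v. E u v \<and> u \<in> U \<and> v \<notin> U"
    using x y(2) by (induction rule: rtranclp_induct) auto
  then show ?thesis using edge_in_V by blast
qed

lemma deg_pos: "u \<in> V \<Longrightarrow> 0 < deg V E u"
  using exists_boundary_edge[of "{u}"] card_ge_2
  by (fastforce simp: deg_def card_gt_0_iff mem_nbrs_iff)

lemma min_deg_le_deg: "u \<in> V \<Longrightarrow> min_deg V E \<le> deg V E u"
  using finite_V by (simp add: min_deg_def)

lemma deg_le_max_deg: "u \<in> V \<Longrightarrow> deg V E u \<le> max_deg V E"
  using finite_V by (simp add: max_deg_def)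

lemma min_deg_ge_1: "1 \<le> min_deg V E"
proof -
  have "Min (deg V E ` V) \<in> deg V E ` V" using finite_V V_nonempty by simp
  then obtain u where "u \<in> V" "Min (deg V E ` V) = deg V E u" by auto
  then show ?thesis using deg_pos[of u] by (simp add: min_deg_def)
qed

lemma max_deg_le_card: "max_deg V E \<le> card V"
proof -
  have "Max (deg V E ` V) \<in> deg V E ` V" using finite_V V_nonempty by simp
  then obtain u where "u \<in> V" "Max (deg V E ` V) = deg V E u" by auto
  moreover have "deg V E u \<le> card V"
    unfolding deg_def nbrs_def using finite_V by (intro card_mono) auto
  ultimately show ?thesis by (simp add: max_deg_def)
qed

lemma min_deg_le_max_deg: "min_deg V E \<le> max_deg V E"
  using min_deg_le_deg deg_le_max_deg V_nonempty by fastforce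

section \<open>One step of the mixed Moran process\<close>

definition total_fitness :: "'a set \<Rightarrow> real" where
  "total_fitness S = (\<Sum>w\<in>V. fitness r S w)"

definition nbr_fitness :: "'a set \<Rightarrow> 'a \<Rightarrow> real" where
  "nbr_fitness S v = (\<Sum>w\<in>nbrs V E v. fitness r S w)"

lemma fitness_ge_1: "1 \<le> fitness r S u"
  using r_ge_1 by (simp add: fitness_def)

lemma fitness_le_r: "fitness r S u \<le> r"
  using r_ge_1 by (simp add: fitness_def)

lemma total_fitness_bounds: "real (card V) \<le> total_fitness S" "total_fitness S \<le> r * card V"
  unfolding total_fitness_def
  using sum_mono[of V "\<lambda>_. 1" "fitness r S", OF fitness_ge_1]
    sum_mono[of V "fitness r S" "\<lambda>_. r", OF fitness_le_r] by (auto simp: mult.commute)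

lemma nbr_fitness_bounds: "real (deg V E v) \<le> nbr_fitness S v" "nbr_fitness S v \<le> r * deg V E v"
  unfolding nbr_fitness_def deg_def
  using sum_mono[of "nbrs V E v" "\<lambda>_. 1" "fitness r S", OF fitness_ge_1]
    sum_mono[of "nbrs V E v" "fitness r S" "\<lambda>_. r", OF fitness_le_r] by (auto simp: mult.commute)

lemma total_fitness_pos: "0 < total_fitness S"
  using total_fitness_bounds(1)[of S] card_V_pos by linarith

lemma nbr_fitness_pos: "v \<in> V \<Longrightarrow> 0 < nbr_fitness S v"
  using nbr_fitness_bounds(1)[of v S] deg_pos[of v] by linarith

text \<open>The probability that the next step gives v the type of its neighbour u, summing the
  Birth-death event (u reproduces onto v) and the death-Birth event (v dies, u wins).\<close>

definition copy_prob :: "'a set \<Rightarrow> 'a \<Rightarrow> 'a \<Rightarrow> real" where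
  "copy_prob S u v =
     lam * (fitness r S u / (total_fitness S * real (deg V E u)))
   + (1 - lam) * (fitness r S u / (real (card V) * nbr_fitness S v))"

definition step_expect :: "'a set \<Rightarrow> ('a \<Rightarrow> 'a \<Rightarrow> real) \<Rightarrow> real" where
  "step_expect S h = (\<Sum>u\<in>V. \<Sum>v\<in>nbrs V E u. copy_prob S u v * h u v)"

lemma sum_nbrs_swap:
  "(\<Sum>u\<in>V. \<Sum>v\<in>nbrs V E u. H u v) = (\<Sum>u\<in>V. \<Sum>v\<in>nbrs V E u. H v u)"
proof -
  have nbrs_sum: "(\<Sum>v\<in>nbrs V E u. G v) = (\<Sum>v\<in>V. if E u v then G v else 0)" for u G
    unfolding nbrs_def by (rule sum.inter_filter[OF finite_V])
  have "(\<Sum>u\<in>V. \<Sum>v\<in>nbrs V E u. H u v) = (\<Sum>u\<in>V. \<Sum>v\<in>V. if E u v then H u v else 0)"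
    by (simp add: nbrs_sum)
  also have "\<dots> = (\<Sum>v\<in>V. \<Sum>u\<in>V. if E u v then H u v else 0)"
    by (rule sum.swap)
  also have "\<dots> = (\<Sum>v\<in>V. \<Sum>u\<in>V. if E v u then H u v else 0)"
    by (intro sum.cong refl) (metis edge_sym)
  finally show ?thesis by (simp add: nbrs_sum)
qed

lemma step_expect_split:
  "step_expect S h =
     lam * (\<Sum>u\<in>V. \<Sum>v\<in>nbrs V E u. fitness r S u / (total_fitness S * real (deg V E u)) * h u v)
   + (1 - lam) * (\<Sum>v\<in>V. \<Sum>u\<in>nbrs V E v. fitness r S u / (real (card V) * nbr_fitness S v) * h u v)"
proof -
  let ?db = "\<lambda>u v. fitness r S u / (real (card V) * nbr_fitness S v) * h u v"
  have "step_expect S h =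
     lam * (\<Sum>u\<in>V. \<Sum>v\<in>nbrs V E u. fitness r S u / (total_fitness S * real (deg V E u)) * h u v)
   + (1 - lam) * (\<Sum>u\<in>V. \<Sum>v\<in>nbrs V E u. ?db u v)"
    unfolding step_expect_def copy_prob_def
    by (simp only: sum.distrib sum_distrib_left distrib_right mult.assoc)
  also have "(\<Sum>u\<in>V. \<Sum>v\<in>nbrs V E u. ?db u v) = (\<Sum>v\<in>V. \<Sum>u\<in>nbrs V E v. ?db u v)"
    by (rule sum_nbrs_swap)
  finally show ?thesis .
qed

lemma moran_trans_eq_step_expect:
  "moran_trans V E lam r S T = step_expect S (\<lambda>u v. of_bool (copy_type S u v = T))"
  unfolding moran_trans_def step_expect_split total_fitness_def nbr_fitness_def by (simp add: of_bool_def)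

lemma birth_death_total: "(\<Sum>u\<in>V. \<Sum>v\<in>nbrs V E u. fitness r S u / (total_fitness S * real (deg V E u))) = 1"
proof -
  have "(\<Sum>v\<in>nbrs V E u. fitness r S u / (total_fitness S * real (deg V E u))) = fitness r S u / total_fitness S"
    if "u \<in> V" for u
    using deg_pos[OF that] by (auto simp: deg_def)
  then have "(\<Sum>u\<in>V. \<Sum>v\<in>nbrs V E u. fitness r S u / (total_fitness S * real (deg V E u)))
      = (\<Sum>u\<in>V. fitness r S u) / total_fitness S"
    by (simp add: sum_divide_distrib)
  then show ?thesis using total_fitness_pos[of S] by (simp add: total_fitness_def)
qed

lemma death_birth_total: "(\<Sum>v\<in>V. \<Sum>u\<in>nbrs V E v. fitness r S u / (real (card V) * nbr_fitness S v)) = 1"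
proof -
  have "(\<Sum>u\<in>nbrs V E v. fitness r S u / (real (card V) * nbr_fitness S v)) = 1 / real (card V)"
    if "v \<in> V" for v
    using nbr_fitness_pos[OF that, of S] card_V_pos
    by (simp add: sum_divide_distrib[symmetric] nbr_fitness_def[symmetric])
  then show ?thesis using card_V_pos by simp
qed

lemma step_expect_const: "step_expect S (\<lambda>u v. c) = c"
  unfolding step_expect_split
  by (simp only: sum_distrib_right[symmetric] birth_death_total death_birth_total) (simp add: algebra_simps)

lemma copy_prob_nonneg: "0 \<le> copy_prob S u v"
  unfolding copy_prob_def
  using lam_nonneg lam_le_1 fitness_ge_1[of S u] total_fitness_pos[of S] card_V_pos
    nbr_fitness_bounds(1)[of v S]
  by (intro add_nonneg_nonneg mult_nonneg_nonneg divide_nonneg_nonneg) auto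

lemma step_expect_cong: "(\<And>u v. E u v \<Longrightarrow> h u v = h' u v) \<Longrightarrow> step_expect S h = step_expect S h'"
  unfolding step_expect_def by (auto intro!: sum.cong simp: mem_nbrs_iff)

lemma step_expect_nonneg: "(\<And>u v. E u v \<Longrightarrow> 0 \<le> h u v) \<Longrightarrow> 0 \<le> step_expect S h"
  unfolding step_expect_def by (auto intro!: sum_nonneg mult_nonneg_nonneg copy_prob_nonneg simp: mem_nbrs_iff)

lemma step_expect_diff: "step_expect S (\<lambda>u v. h u v - h' u v) = step_expect S h - step_expect S h'"
  unfolding step_expect_def by (simp add: right_diff_distrib sum_subtractf)

lemma step_expect_cmult: "step_expect S (\<lambda>u v. c * h u v) = c * step_expect S h"
  unfolding step_expect_def by (simp add: sum_distrib_left algebra_simps)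

lemma term_le_step_expect:
  assumes "E u v" and "\<And>u v. E u v \<Longrightarrow> 0 \<le> h u v"
  shows "copy_prob S u v * h u v \<le> step_expect S h"
proof -
  have nonneg: "0 \<le> copy_prob S x y * h x y" if "y \<in> nbrs V E x" for x y
    using assms(2) that by (simp add: copy_prob_nonneg mem_nbrs_iff)
  have "copy_prob S u v * h u v \<le> (\<Sum>y\<in>nbrs V E u. copy_prob S u y * h u y)"
    using assms(1) nonneg by (intro member_le_sum) (auto simp: mem_nbrs_iff)
  also have "\<dots> \<le> step_expect S h"
    unfolding step_expect_def using assms(1) edge_in_V nonneg finite_V
    by (intro member_le_sum[where f="\<lambda>x. \<Sum>y\<in>nbrs V E x. copy_prob S x y * h x y"] sum_nonneg) auto
  finally show ?thesis .
qed

definition next_expect :: "'a set \<Rightarrow> ('a set \<Rightarrow> real) \<Rightarrow> real" where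
  "next_expect U f = (\<Sum>T\<in>Pow V. moran_trans V E lam r U T * f T)"

lemma next_expect_eq_step_expect:
  assumes "U \<subseteq> V"
  shows "next_expect U f = step_expect U (\<lambda>u v. f (copy_type U u v))"
proof -
  let ?c = "\<lambda>u v T. copy_prob U u v * (of_bool (copy_type U u v = T) * f T)"
  have "next_expect U f = (\<Sum>T\<in>Pow V. \<Sum>u\<in>V. \<Sum>v\<in>nbrs V E u. ?c u v T)"
    unfolding next_expect_def moran_trans_eq_step_expect step_expect_def
    by (simp only: sum_distrib_right mult.assoc)
  also have "\<dots> = (\<Sum>u\<in>V. \<Sum>v\<in>nbrs V E u. \<Sum>T\<in>Pow V. ?c u v T)"
    by (subst sum.swap) (rule sum.cong[OF refl], rule sum.swap)
  also have "\<dots> = step_expect U (\<lambda>u v. f (copy_type U u v))"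
    unfolding step_expect_def
  proof (intro sum.cong refl)
    fix u v assume "u \<in> V" "v \<in> nbrs V E u"
    then have "Pow V \<inter> {T. copy_type U u v = T} = {copy_type U u v}"
      using assms by (auto simp: copy_type_def nbrs_def)
    then show "(\<Sum>T\<in>Pow V. ?c u v T) = copy_prob U u v * f (copy_type U u v)"
      using finite_V by (simp add: sum_distrib_left[symmetric])
  qed
  finally show ?thesis .
qed

lemma moran_trans_nonneg: "0 \<le> moran_trans V E lam r S T"
  unfolding moran_trans_eq_step_expect by (rule step_expect_nonneg) simp

lemma moran_trans_V_V: "moran_trans V E lam r V V = 1"
proof -
  have "moran_trans V E lam r V V = step_expect V (\<lambda>u v. 1)"
    unfolding moran_trans_eq_step_expect
    by (rule step_expect_cong) (auto simp: copy_type_def edge_in_V insert_absorb)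
  then show ?thesis by (simp add: step_expect_const)
qed

section \<open>Absorption and fixation via Lyapunov functions\<close>

lemma next_expect_const: "U \<subseteq> V \<Longrightarrow> next_expect U (\<lambda>_. c) = c"
  by (simp add: next_expect_eq_step_expect step_expect_const)

lemma moran_steps_nonneg: "0 \<le> moran_steps V E lam r k S T"
  by (induction k arbitrary: T) (auto intro!: sum_nonneg mult_nonneg_nonneg moran_trans_nonneg)

definition expect_at :: "'a set \<Rightarrow> nat \<Rightarrow> ('a set \<Rightarrow> real) \<Rightarrow> real" where
  "expect_at S0 k f = (\<Sum>T\<in>Pow V. moran_steps V E lam r k S0 T * f T)"

lemma expect_at_0: "S0 \<subseteq> V \<Longrightarrow> expect_at S0 0 f = f S0"
proof -
  assume "S0 \<subseteq> V"
  then have "Pow V \<inter> {T. S0 = T} = {S0}" by auto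
  then show ?thesis using finite_V by (simp add: expect_at_def of_bool_def[symmetric])
qed

lemma expect_at_Suc: "expect_at S0 (Suc k) f = expect_at S0 k (\<lambda>U. next_expect U f)"
  unfolding expect_at_def next_expect_def
  by (simp add: sum_distrib_left sum_distrib_right mult.assoc) (rule sum.swap)

lemma expect_at_mono:
  "(\<And>U. U \<subseteq> V \<Longrightarrow> f U \<le> g U) \<Longrightarrow> expect_at S0 k f \<le> expect_at S0 k g"
  unfolding expect_at_def by (auto intro!: sum_mono mult_left_mono moran_steps_nonneg)

lemma expect_at_const: "S0 \<subseteq> V \<Longrightarrow> expect_at S0 k (\<lambda>_. c) = c"
proof (induction k)
  case (Suc k)
  have "expect_at S0 k (\<lambda>U. next_expect U (\<lambda>_. c)) = expect_at S0 k (\<lambda>_. c)"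
    unfolding expect_at_def by (intro sum.cong refl) (simp add: next_expect_const)
  then show ?case using Suc by (simp add: expect_at_Suc)
qed (simp add: expect_at_0)

definition unabsorbed :: "'a set \<Rightarrow> nat \<Rightarrow> real" where
  "unabsorbed S0 k = (\<Sum>U\<in>Pow V - {{}, V}. moran_steps V E lam r k S0 U)"

lemma unabsorbed_nonneg: "0 \<le> unabsorbed S0 k"
  unfolding unabsorbed_def by (intro sum_nonneg moran_steps_nonneg)

lemma unabsorbed_eq_expect_at: "unabsorbed S0 k = expect_at S0 k (\<lambda>U. of_bool (U \<noteq> {} \<and> U \<noteq> V))"
proof -
  have "Pow V \<inter> {U. U \<noteq> {} \<and> U \<noteq> V} = Pow V - {{}, V}" by auto
  then show ?thesis using finite_V by (simp add: unabsorbed_def expect_at_def)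
qed

lemma absorption_time_le_potential:
  assumes "S0 \<subseteq> V"
    and g_nonneg: "\<And>U. U \<subseteq> V \<Longrightarrow> 0 \<le> g U"
    and g_decrease: "\<And>U. U \<subseteq> V \<Longrightarrow> next_expect U g \<le> g U - of_bool (U \<noteq> {} \<and> U \<noteq> V)"
  shows "summable (unabsorbed S0)" and "absorption_time V E lam r S0 \<le> ennreal (g S0)"
proof -
  have partial: "expect_at S0 N g \<le> g S0 - (\<Sum>k<N. unabsorbed S0 k)" for N
  proof (induction N)
    case (Suc N)
    have "expect_at S0 (Suc N) g \<le> expect_at S0 N (\<lambda>U. g U - of_bool (U \<noteq> {} \<and> U \<noteq> V))"
      unfolding expect_at_Suc by (rule expect_at_mono) (rule g_decrease)
    also have "\<dots> = expect_at S0 N g - unabsorbed S0 N"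
      unfolding unabsorbed_eq_expect_at expect_at_def by (simp add: right_diff_distrib sum_subtractf)
    finally show ?case using Suc by simp
  qed (simp add: expect_at_0 assms(1))
  have bounded: "(\<Sum>k<N. unabsorbed S0 k) \<le> g S0" for N
  proof -
    have "0 \<le> expect_at S0 N g"
      unfolding expect_at_def by (intro sum_nonneg mult_nonneg_nonneg moran_steps_nonneg g_nonneg) auto
    then show ?thesis using partial[of N] by linarith
  qed
  show summable: "summable (unabsorbed S0)"
    using bounded unabsorbed_nonneg by (intro summableI_nonneg_bounded)
  have "absorption_time V E lam r S0 = ennreal (\<Sum>k. unabsorbed S0 k)"
    unfolding absorption_time_def unabsorbed_def[symmetric]
    by (rule suminf_ennreal2) (auto simp: unabsorbed_nonneg summable)
  also have "\<dots> \<le> ennreal (g S0)"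
    using bounded by (intro ennreal_leI suminf_le_const summable)
  finally show "absorption_time V E lam r S0 \<le> ennreal (g S0)" .
qed

lemma moran_steps_tendsto_fixation_prob:
  assumes "S0 \<subseteq> V"
  shows "(\<lambda>k. moran_steps V E lam r k S0 V) \<longlonglongrightarrow> fixation_prob V E lam r S0"
proof -
  have "moran_steps V E lam r k S0 V \<le> moran_steps V E lam r (Suc k) S0 V" for k
  proof -
    have "moran_steps V E lam r k S0 V * moran_trans V E lam r V V
        \<le> (\<Sum>U\<in>Pow V. moran_steps V E lam r k S0 U * moran_trans V E lam r U V)"
      using finite_V
      by (intro member_le_sum mult_nonneg_nonneg moran_steps_nonneg moran_trans_nonneg) auto
    then show ?thesis by (simp add: moran_trans_V_V)
  qed
  then have "incseq (\<lambda>k. moran_steps V E lam r k S0 V)" by (rule incseq_SucI)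
  moreover have "moran_steps V E lam r k S0 V \<le> 1" for k
  proof -
    have "moran_steps V E lam r k S0 V \<le> (\<Sum>T\<in>Pow V. moran_steps V E lam r k S0 T)"
      using finite_V by (intro member_le_sum moran_steps_nonneg) auto
    also have "\<dots> = 1"
      using expect_at_const[OF assms, of k 1] by (simp add: expect_at_def)
    finally show ?thesis .
  qed
  ultimately obtain L where "(\<lambda>k. moran_steps V E lam r k S0 V) \<longlonglongrightarrow> L"
    using incseq_convergent by blast
  then show ?thesis unfolding fixation_prob_def by (simp add: limI)
qed

lemma submartingale_le_fixation_prob:
  assumes S0: "S0 \<subseteq> V" and absorbed: "unabsorbed S0 \<longlonglongrightarrow> 0"
    and f_sub: "\<And>U. U \<subseteq> V \<Longrightarrow> f U \<le> next_expect U f"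
    and f_empty: "f {} \<le> 0" and f_le: "\<And>U. U \<subseteq> V \<Longrightarrow> f U \<le> f V"
  shows "f S0 \<le> f V * fixation_prob V E lam r S0"
proof -
  have "f S0 \<le> expect_at S0 k f" for k
  proof (induction k)
    case (Suc k)
    also have "expect_at S0 k f \<le> expect_at S0 (Suc k) f"
      unfolding expect_at_Suc by (rule expect_at_mono) (rule f_sub)
    finally show ?case .
  qed (simp add: expect_at_0 S0)
  also have "expect_at S0 k f \<le> f V * (moran_steps V E lam r k S0 V + unabsorbed S0 k)" for k
  proof -
    have "expect_at S0 k f \<le> expect_at S0 k (\<lambda>U. f V * (of_bool (U = V) + of_bool (U \<noteq> {} \<and> U \<noteq> V)))"
      using f_empty f_le V_nonempty by (intro expect_at_mono) auto
    also have "\<dots> = f V * (expect_at S0 k (\<lambda>U. of_bool (U = V)) + unabsorbed S0 k)"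
      unfolding unabsorbed_eq_expect_at expect_at_def
      by (simp add: ring_distribs sum.distrib sum_distrib_left mult.left_commute
          del: sum_mult_of_bool_eq sum_of_bool_mult_eq)
    also have "expect_at S0 k (\<lambda>U. of_bool (U = V)) = moran_steps V E lam r k S0 V"
    proof -
      have "Pow V \<inter> {T. T = V} = {V}" by auto
      then show ?thesis using finite_V by (simp add: expect_at_def)
    qed
    finally show ?thesis .
  qed
  finally have bound: "f S0 \<le> f V * (moran_steps V E lam r k S0 V + unabsorbed S0 k)" for k .
  have "(\<lambda>k. f V * (moran_steps V E lam r k S0 V + unabsorbed S0 k))
      \<longlonglongrightarrow> f V * (fixation_prob V E lam r S0 + 0)"
    by (intro tendsto_intros moran_steps_tendsto_fixation_prob S0 absorbed)
  then show ?thesis using bound by (intro LIMSEQ_le_const) auto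
qed

section \<open>The degree volume of the mutant set\<close>

definition vol :: "'a set \<Rightarrow> real" where
  "vol S = (\<Sum>x\<in>S. real (deg V E x))"

lemma vol_nonneg: "0 \<le> vol S"
  unfolding vol_def by (simp add: sum_nonneg)

lemma vol_mono: "S \<subseteq> V \<Longrightarrow> vol S \<le> vol V"
  unfolding vol_def using finite_V by (intro sum_mono2) auto

lemma vol_V_le: "vol V \<le> real (card V) * max_deg V E"
  unfolding vol_def using sum_mono[of V "\<lambda>x. real (deg V E x)" "\<lambda>_. max_deg V E"] deg_le_max_deg
  by simp

lemma min_deg_le_vol: "S \<subseteq> V \<Longrightarrow> S \<noteq> {} \<Longrightarrow> min_deg V E \<le> vol S"
proof -
  assume "S \<subseteq> V" "S \<noteq> {}"
  then obtain x where "x \<in> S" "x \<in> V" by auto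
  then have "real (deg V E x) \<le> vol S"
    unfolding vol_def using finite_V \<open>S \<subseteq> V\<close> finite_subset by (intro member_le_sum) auto
  then show ?thesis using min_deg_le_deg[OF \<open>x \<in> V\<close>] by linarith
qed

lemma vol_copy_type:
  assumes "U \<subseteq> V" "v \<in> V"
  shows "vol (copy_type U u v) - vol U =
    (if u \<in> U \<and> v \<notin> U then real (deg V E v) else if u \<notin> U \<and> v \<in> U then - real (deg V E v) else 0)"
proof -
  have "finite U" using assms finite_V finite_subset by blast
  then show ?thesis
    by (cases "u \<in> U"; cases "v \<in> U") (auto simp: copy_type_def vol_def insert_absorb sum_diff1)
qed

lemma copy_prob_balance:
  assumes "E u v" "u \<in> U" "v \<notin> U"
    and deg_sq: "real (deg V E u) ^ 2 \<le> r * real (deg V E v) ^ 2"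
  shows "copy_prob U v u * real (deg V E u) \<le> copy_prob U u v * real (deg V E v)"
proof -
  let ?W = "total_fitness U" and ?n = "real (card V)"
  let ?du = "real (deg V E u)" and ?dv = "real (deg V E v)"
  have u: "u \<in> V" and v: "v \<in> V" using edge_in_V[OF assms(1)] by auto
  have du: "0 < ?du" and dv: "0 < ?dv" using deg_pos u v by auto
  have W: "0 < ?W" by (rule total_fitness_pos)
  have birth_death: "?du / (?W * ?dv) \<le> r * ?dv / (?W * ?du)"
  proof -
    have "?du / (?W * ?dv) = ?du ^ 2 / (?W * ?du * ?dv)"
      using du by (simp add: power2_eq_square)
    also have "\<dots> \<le> r * ?dv ^ 2 / (?W * ?du * ?dv)"
      using deg_sq W du dv by (intro divide_right_mono) auto
    also have "\<dots> = r * ?dv / (?W * ?du)"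
      using dv by (simp add: power2_eq_square)
    finally show ?thesis .
  qed
  have death_birth: "?du / (?n * nbr_fitness U u) \<le> r * ?dv / (?n * nbr_fitness U v)"
  proof -
    have "?du / (?n * nbr_fitness U u) \<le> 1 / ?n"
      using nbr_fitness_bounds(1)[of u U] du card_V_pos by (simp add: divide_simps)
    also have "\<dots> \<le> r * ?dv / (?n * nbr_fitness U v)"
      using nbr_fitness_bounds(2)[of U v] nbr_fitness_pos[OF v, of U] card_V_pos
      by (simp add: divide_simps)
    finally show ?thesis .
  qed
  have "copy_prob U v u * ?du
      = lam * (?du / (?W * ?dv)) + (1 - lam) * (?du / (?n * nbr_fitness U u))"
    using assms(2,3) by (simp add: copy_prob_def fitness_def algebra_simps)
  also have "\<dots> \<le> lam * (r * ?dv / (?W * ?du)) + (1 - lam) * (r * ?dv / (?n * nbr_fitness U v))"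
    using birth_death death_birth lam_nonneg lam_le_1 by (intro add_mono mult_left_mono) auto
  also have "\<dots> = copy_prob U u v * ?dv"
    using assms(2,3) by (simp add: copy_prob_def fitness_def algebra_simps)
  finally show ?thesis .
qed

lemma vol_increment_drift_nonneg:
  assumes deg_sq: "\<And>u v. E u v \<Longrightarrow> real (deg V E u) ^ 2 \<le> r * real (deg V E v) ^ 2"
    and "U \<subseteq> V"
  shows "0 \<le> step_expect U (\<lambda>u v. vol (copy_type U u v) - vol U)"
proof -
  define gain where "gain u v = of_bool (u \<in> U \<and> v \<notin> U) * (copy_prob U u v * real (deg V E v))" for u v
  define loss where "loss u v = of_bool (u \<notin> U \<and> v \<in> U) * (copy_prob U u v * real (deg V E v))" for u v
  have "step_expect U (\<lambda>u v. vol (copy_type U u v) - vol U)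
      = (\<Sum>u\<in>V. \<Sum>v\<in>nbrs V E u. gain u v) - (\<Sum>u\<in>V. \<Sum>v\<in>nbrs V E u. loss u v)"
    unfolding step_expect_def sum_subtractf[symmetric]
    using assms(2) by (intro sum.cong refl) (auto simp: vol_copy_type gain_def loss_def nbrs_def)
  \<comment> \<open>Reversing the edges of the losses puts each loss next to the gain along the same edge,
    which dominates it by copy_prob_balance.\<close>
  also have "(\<Sum>u\<in>V. \<Sum>v\<in>nbrs V E u. loss u v) = (\<Sum>u\<in>V. \<Sum>v\<in>nbrs V E u. loss v u)"
    by (rule sum_nbrs_swap)
  also have "(\<Sum>u\<in>V. \<Sum>v\<in>nbrs V E u. gain u v) - \<dots> = (\<Sum>u\<in>V. \<Sum>v\<in>nbrs V E u. gain u v - loss v u)"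
    by (simp add: sum_subtractf)
  also have "\<dots> \<ge> 0"
    using copy_prob_balance deg_sq by (intro sum_nonneg) (auto simp: gain_def loss_def mem_nbrs_iff)
  finally show ?thesis .
qed

lemma vol_submartingale:
  assumes "\<And>u v. E u v \<Longrightarrow> real (deg V E u) ^ 2 \<le> r * real (deg V E v) ^ 2"
    and "U \<subseteq> V"
  shows "vol U \<le> next_expect U vol"
  using vol_increment_drift_nonneg[OF assms]
  by (simp add: next_expect_eq_step_expect[OF assms(2)] step_expect_diff step_expect_const)

lemma copy_prob_mutant_ge:
  assumes "E u v" "u \<in> U"
  shows "1 / (real (card V) * max_deg V E) \<le> copy_prob U u v"
proof -
  let ?n = "real (card V)" and ?M = "max_deg V E"
  have u: "u \<in> V" and v: "v \<in> V" using edge_in_V[OF assms(1)] by auto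
  have M: "0 < ?M" using min_deg_ge_1 min_deg_le_max_deg by linarith
  have birth_death: "1 / (?n * ?M) \<le> r / (total_fitness U * real (deg V E u))"
  proof -
    have "total_fitness U * real (deg V E u) \<le> (r * ?n) * ?M"
      using total_fitness_bounds(2)[of U] deg_le_max_deg[OF u] total_fitness_pos[of U]
      by (intro mult_mono) auto
    moreover have "0 < total_fitness U * real (deg V E u)"
      using total_fitness_pos deg_pos[OF u] by simp
    ultimately show ?thesis
      using r_ge_1 M card_V_pos by (simp add: divide_simps mult.commute mult.left_commute)
  qed
  have death_birth: "1 / (?n * ?M) \<le> r / (?n * nbr_fitness U v)"
  proof -
    have "?n * nbr_fitness U v \<le> ?n * (r * ?M)"
      using nbr_fitness_bounds(2)[of U v] deg_le_max_deg[OF v] r_ge_1 card_V_pos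
      by (intro mult_left_mono) (auto intro: order.trans)
    moreover have "0 < ?n * nbr_fitness U v"
      using card_V_pos nbr_fitness_pos[OF v] by simp
    ultimately show ?thesis
      using r_ge_1 M card_V_pos by (simp add: divide_simps mult.commute mult.left_commute)
  qed
  have convex: "c = lam * c + (1 - lam) * c" for c :: real
    by (simp add: algebra_simps)
  have "1 / (?n * ?M) = lam * (1 / (?n * ?M)) + (1 - lam) * (1 / (?n * ?M))"
    by (rule convex)
  also have "\<dots> \<le> copy_prob U u v"
    unfolding copy_prob_def using assms(2) birth_death death_birth lam_nonneg lam_le_1
    by (intro add_mono mult_left_mono) (auto simp: fitness_def)
  finally show ?thesis .
qed

lemma vol_increment_sq_drift_ge:
  assumes "U \<subseteq> V" "U \<noteq> {}" "U \<noteq> V"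
  shows "min_deg V E ^ 2 / (real (card V) * max_deg V E)
    \<le> step_expect U (\<lambda>u v. (vol (copy_type U u v) - vol U) ^ 2)"
proof -
  obtain u v where e: "E u v" and u: "u \<in> U" and v: "v \<in> V" "v \<notin> U"
    using exists_boundary_edge[OF assms] by blast
  have "min_deg V E ^ 2 / (real (card V) * max_deg V E)
      = 1 / (real (card V) * max_deg V E) * min_deg V E ^ 2" by simp
  also have "\<dots> \<le> copy_prob U u v * real (deg V E v) ^ 2"
    using copy_prob_mutant_ge[OF e u] min_deg_le_deg[OF v(1)] min_deg_ge_1 copy_prob_nonneg
    by (intro mult_mono power_mono) auto
  also have "\<dots> = copy_prob U u v * (vol (copy_type U u v) - vol U) ^ 2"
    using u v assms(1) by (simp add: vol_copy_type)
  also have "\<dots> \<le> step_expect U (\<lambda>u v. (vol (copy_type U u v) - vol U) ^ 2)"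
    by (rule term_le_step_expect[OF e]) simp
  finally show ?thesis .
qed

text \<open>The factor in front is the reciprocal of the bound in vol_increment_sq_drift_ge.\<close>

definition potential :: "'a set \<Rightarrow> real" where
  "potential S = real (card V) * max_deg V E / min_deg V E ^ 2 * (vol V ^ 2 - vol S ^ 2)"

lemma potential_nonneg: "S \<subseteq> V \<Longrightarrow> 0 \<le> potential S"
  unfolding potential_def using min_deg_ge_1 min_deg_le_max_deg vol_nonneg vol_mono
  by (intro mult_nonneg_nonneg) (auto intro: power_mono)

lemma potential_decrease:
  assumes deg_sq: "\<And>u v. E u v \<Longrightarrow> real (deg V E u) ^ 2 \<le> r * real (deg V E v) ^ 2"
    and U: "U \<subseteq> V"
  shows "next_expect U potential \<le> potential U - of_bool (U \<noteq> {} \<and> U \<noteq> V)"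
proof -
  define K where "K = real (card V) * max_deg V E / min_deg V E ^ 2"
  define \<Delta> where "\<Delta> u v = vol (copy_type U u v) - vol U" for u v
  have K: "0 < K"
    unfolding K_def using card_V_pos min_deg_ge_1 min_deg_le_max_deg by simp
  have potential_eq: "potential S = K * (vol V ^ 2 - vol S ^ 2)" for S
    by (simp add: potential_def K_def)
  have "next_expect U potential
      = step_expect U (\<lambda>u v. potential U - K * (2 * vol U) * \<Delta> u v - K * \<Delta> u v ^ 2)"
    unfolding next_expect_eq_step_expect[OF U] potential_eq
    by (rule step_expect_cong) (simp add: \<Delta>_def power2_eq_square algebra_simps)
  also have "\<dots> = potential U - K * (2 * vol U) * step_expect U \<Delta> - K * step_expect U (\<lambda>u v. \<Delta> u v ^ 2)"
    by (simp add: step_expect_diff step_expect_cmult step_expect_const)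
  also have "\<dots> \<le> potential U - K * step_expect U (\<lambda>u v. \<Delta> u v ^ 2)"
  proof -
    have "0 \<le> step_expect U \<Delta>"
      unfolding \<Delta>_def[abs_def] by (rule vol_increment_drift_nonneg[OF deg_sq U])
    then show ?thesis using K vol_nonneg[of U] by simp
  qed
  also have "\<dots> \<le> potential U - of_bool (U \<noteq> {} \<and> U \<noteq> V)"
  proof (cases "U \<noteq> {} \<and> U \<noteq> V")
    case True
    have "1 = K * (min_deg V E ^ 2 / (real (card V) * max_deg V E))"
      unfolding K_def using card_V_pos min_deg_ge_1 min_deg_le_max_deg by (simp add: field_simps)
    also have "\<dots> \<le> K * step_expect U (\<lambda>u v. \<Delta> u v ^ 2)"
      using vol_increment_sq_drift_ge[OF U] True K unfolding \<Delta>_def by (intro mult_left_mono) auto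
    finally show ?thesis using True by simp
  next
    case False
    have "0 \<le> step_expect U (\<lambda>u v. \<Delta> u v ^ 2)" by (rule step_expect_nonneg) simp
    then show ?thesis using False K by auto
  qed
  finally show ?thesis .
qed

lemma edge_deg_sq_le:
  assumes ratio: "max_deg V E ^ 2 \<le> r * min_deg V E ^ 2" and "E u v"
  shows "real (deg V E u) ^ 2 \<le> r * real (deg V E v) ^ 2"
proof -
  have u: "u \<in> V" and v: "v \<in> V" using edge_in_V[OF assms(2)] by auto
  have "real (deg V E u) ^ 2 \<le> max_deg V E ^ 2"
    using deg_le_max_deg[OF u] by (intro power_mono) auto
  also have "\<dots> \<le> r * min_deg V E ^ 2" by (rule ratio)
  also have "\<dots> \<le> r * real (deg V E v) ^ 2"
    using min_deg_le_deg[OF v] min_deg_ge_1 r_ge_1 by (intro mult_left_mono power_mono) auto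
  finally show ?thesis .
qed

lemma potential_le:
  assumes ratio: "max_deg V E ^ 2 \<le> r * min_deg V E ^ 2" and "S \<subseteq> V"
  shows "potential S \<le> r * real (card V) ^ 4"
proof -
  let ?n = "real (card V)" and ?m = "min_deg V E" and ?M = "max_deg V E"
  have m: "1 \<le> ?m" and mM: "?m \<le> ?M" by (rule min_deg_ge_1, rule min_deg_le_max_deg)
  have "potential S \<le> ?n * ?M / ?m ^ 2 * vol V ^ 2"
    unfolding potential_def using m mM card_V_pos by (intro mult_left_mono) auto
  also have "\<dots> \<le> ?n * ?M / ?m ^ 2 * (?n * ?M) ^ 2"
    using m mM card_V_pos vol_V_le vol_nonneg by (intro mult_left_mono power_mono) auto
  also have "\<dots> = ?n ^ 3 * ?M * (?M ^ 2 / ?m ^ 2)"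
    by (simp add: power2_eq_square power3_eq_cube)
  also have "\<dots> \<le> ?n ^ 3 * ?n * r"
    using max_deg_le_card ratio m mM card_V_pos
    by (intro mult_left_mono mult_mono) (auto simp: pos_divide_le_eq)
  also have "\<dots> = r * ?n ^ 4"
    by (simp add: power_numeral_reduce)
  finally show ?thesis .
qed

lemma absorption_time_le:
  assumes ratio: "max_deg V E ^ 2 \<le> r * min_deg V E ^ 2" and S0: "S0 \<subseteq> V"
  shows "absorption_time V E lam r S0 \<le> ennreal (r * real (card V) ^ 4)"
proof -
  have "absorption_time V E lam r S0 \<le> ennreal (potential S0)"
    using S0 potential_nonneg potential_decrease edge_deg_sq_le[OF ratio]
    by (intro absorption_time_le_potential(2)) auto
  also have "\<dots> \<le> ennreal (r * real (card V) ^ 4)"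
    by (intro ennreal_leI potential_le[OF ratio S0])
  finally show ?thesis .
qed

lemma fixation_prob_ge:
  assumes ratio: "max_deg V E ^ 2 \<le> r * min_deg V E ^ 2" and S0: "S0 \<subseteq> V" "S0 \<noteq> {}"
  shows "1 / (r * real (card V)) \<le> fixation_prob V E lam r S0"
proof -
  let ?n = "real (card V)" and ?m = "min_deg V E" and ?M = "max_deg V E"
  have edges: "\<And>u v. E u v \<Longrightarrow> real (deg V E u) ^ 2 \<le> r * real (deg V E v) ^ 2"
    using edge_deg_sq_le[OF ratio] .
  have absorbed: "unabsorbed S0 \<longlonglongrightarrow> 0"
    using S0(1) potential_nonneg potential_decrease[OF edges]
    by (intro summable_LIMSEQ_zero absorption_time_le_potential(1)[where g = potential]) auto
  have "vol S0 \<le> vol V * fixation_prob V E lam r S0"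
    by (rule submartingale_le_fixation_prob[OF S0(1) absorbed vol_submartingale[OF edges]])
      (auto simp: vol_mono, simp add: vol_def)
  moreover have vol_V: "0 < vol V"
    using min_deg_le_vol[OF order.refl V_nonempty] min_deg_ge_1 by linarith
  ultimately have "vol S0 / vol V \<le> fixation_prob V E lam r S0"
    by (simp add: pos_divide_le_eq mult.commute)
  moreover have "1 / (r * ?n) \<le> vol S0 / vol V"
  proof -
    have m: "1 \<le> ?m" by (rule min_deg_ge_1)
    have "?M ^ 2 \<le> r * ?m ^ 2" by (rule ratio)
    also have "\<dots> \<le> r ^ 2 * ?m ^ 2"
      using mult_right_mono[of 1 r r] r_ge_1 by (intro mult_right_mono) (auto simp: power2_eq_square)
    also have "\<dots> = (r * ?m) ^ 2" by (rule power_mult_distrib[symmetric])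
    finally have "?M \<le> r * ?m"
      by (rule power2_le_imp_le) (use m r_ge_1 in simp)
    then have "?n * ?M \<le> ?n * (r * ?m)"
      using card_V_pos by (intro mult_left_mono) auto
    then have "vol V \<le> ?n * (r * ?m)"
      using vol_V_le by linarith
    then have "?m / (?n * (r * ?m)) \<le> vol S0 / vol V"
      using min_deg_le_vol[OF S0] vol_V m by (intro frac_le) auto
    then show ?thesis using m by (simp add: mult.commute)
  qed
  ultimately show ?thesis by linarith
qed

end

lemma almost_regular_deg_ratio:
  assumes "almost_regular \<alpha> V E" and "\<alpha>\<^sup>2 \<le> r"
  shows "max_deg V E ^ 2 \<le> r * min_deg V E ^ 2"
proof -
  have "max_deg V E \<le> \<alpha> * min_deg V E"
    using assms(1) by (simp add: almost_regular_def max_deg_def min_deg_def)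
  then have "max_deg V E ^ 2 \<le> (\<alpha> * min_deg V E) ^ 2"
    by (rule power_mono) (simp add: max_deg_def)
  also have "\<dots> = \<alpha>\<^sup>2 * min_deg V E ^ 2" by (simp add: power_mult_distrib)
  also have "\<dots> \<le> r * min_deg V E ^ 2" using assms(2) by (simp add: mult_right_mono)
  finally show ?thesis .
qed

theorem mainTheorem8:
  fixes r :: real
  shows "\<exists>C c. C > 0 \<and> c > 0 \<and>
    (\<forall>(\<alpha>::real) (V::nat set) (E::nat \<Rightarrow> nat \<Rightarrow> bool) (lam::real) (S0::nat set).
       \<alpha> \<ge> 1 \<and> connected_graph V E \<and> card V \<ge> 2 \<and> almost_regular \<alpha> V E \<and>
       r \<ge> \<alpha>\<^sup>2 \<and> 0 \<le> lam \<and> lam \<le> 1 \<and> S0 \<subseteq> V \<and> S0 \<noteq> {} \<longrightarrow>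
         absorption_time V E lam r S0 \<le> ennreal (C * real (card V) ^ 4) \<and>
         fixation_prob V E lam r S0 \<ge> c / real (card V) ^ 2)"
proof -
  have bounds: "absorption_time V E lam r S0 \<le> ennreal (max 1 r * real (card V) ^ 4) \<and>
      1 / max 1 r / real (card V) ^ 2 \<le> fixation_prob V E lam r S0"
    if "\<alpha> \<ge> 1" "connected_graph V E" "card V \<ge> 2" "almost_regular \<alpha> V E" "r \<ge> \<alpha>\<^sup>2"
      "0 \<le> lam" "lam \<le> 1" "S0 \<subseteq> V" "S0 \<noteq> {}"
    for \<alpha> and V :: "nat set" and E lam S0
  proof -
    have "1 \<le> \<alpha>\<^sup>2" using \<open>\<alpha> \<ge> 1\<close> by (simp add: one_le_power)
    then have r: "1 \<le> r" using that(5) by linarith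
    interpret moran_graph V E lam r
      using that r by unfold_locales auto
    have ratio: "max_deg V E ^ 2 \<le> r * min_deg V E ^ 2"
      using almost_regular_deg_ratio that(4,5) .
    have "1 / r / real (card V) ^ 2 \<le> 1 / (r * real (card V))"
      using r card_V_pos that(3) by (simp add: divide_simps power2_eq_square)
    then show ?thesis
      using absorption_time_le[OF ratio that(8)] fixation_prob_ge[OF ratio that(8,9)] r
      by (simp add: max_def)
  qed
  have "0 < max 1 r" "0 < 1 / max 1 r" by auto
  then show ?thesis
    using bounds by blast
qed

end
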